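(* Let $q$ be a 2way-determined two-atom query over $R$ satisfying the standing assumption below, and let $D$ be a database. If the bipartite graph $H(D,q)$ has no matching saturating $V_1$ (i.e. $D\models\neg\mathrm{Matching}$), then $q$ is certain for $D$.
   Context: $R$ has arity at least $1$ with first $l$ positions forming the key. Facts $R(\bar a)$, atoms $R(\bar x)$; $\mathrm{vars}(A)$ variables of $A$; $\overline{\mathrm{key}}(t)$ tuple of first $l$ entries, $\mathrm{key}(t)$ their set; $a\sim b$ iff equal key tuples. Database: finite set of facts; block: maximal set of pairwise key-equal facts; repair: $\subseteq$-maximal subset with no two distinct key-equal facts. $D\models q(ab)$ means $a=\mu(A)$, $b=\mu(B)\in D$ for some variable-to-element mapping $\mu$ ($a=b$ allowed); $q\{ab\}$ means $q(ab)$ or $q(ba)$; $q$ is certain for $D$ if every repair satisfies $q$. $q=AB$ is 2way-determined if $\mathrm{key}(A)\not\subseteq\mathrm{key}(B)$, $\mathrm{key}(B)\not\subseteq\mathrm{key}(A)$, $\mathrm{key}(A)\subseteq\mathrm{vars}(B)$, $\mathrm{key}(B)\subseteq\mathrm{vars}(A)$. Standing assumption: $\overline{\mathrm{key}}(A)\ne\overline{\mathrm{key}}(B)$ and $q$ not equivalent over consistent databases to a single-atom query. Matching algorithm: the solution graph $G(D,q)$ is the undirected graph on the facts of $D$ with an edge $\{a,b\}$ iff $D\models q\{ab\}$. A connected component $C$ of $G(D,q)$ is a quasi-clique if for all $a,b\in C$ with $a\not\sim b$, $\{a,b\}$ is an edge. For a fact $a$, $\mathrm{clique}(a)$ is the component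 of $a$ if it is a quasi-clique, and $\{a\}$ otherwise. $H(D,q)$ is the bipartite graph with parts $V_1$ = the set of blocks of $D$ and $V_2=\{\mathrm{clique}(a): a\in D\}$, with an edge $(v_1,v_2)$ iff block $v_1$ contains a fact $a\in v_2$ with $D\not\models q(aa)$. $D\models\mathrm{Matching}$ iff $H(D,q)$ has a matching saturating $V_1$. *)

theory Defs
  imports Main
begin

(* Single relation R of arity k; key = first l positions.
   Facts: lists of constants of type 'c (length k); atoms: lists of variables 'v (length k).
   A two-atom query q = AB is represented by the pair of atoms A, B. *)

definition key_tuple :: "nat \<Rightarrow> 'a list \<Rightarrow> 'a list" where
  "key_tuple l t = take l t"

definition key_set :: "nat \<Rightarrow> 'a list \<Rightarrow> 'a set" where
  "key_set l t = set (take l t)"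

definition key_equiv :: "nat \<Rightarrow> 'c list \<Rightarrow> 'c list \<Rightarrow> bool" where
  "key_equiv l a b \<longleftrightarrow> key_tuple l a = key_tuple l b"

definition vars :: "'v list \<Rightarrow> 'v set" where
  "vars A = set A"

definition database :: "nat \<Rightarrow> 'c list set \<Rightarrow> bool" where
  "database k D \<longleftrightarrow> finite D \<and> (\<forall>a\<in>D. length a = k)"

definition consistent :: "nat \<Rightarrow> 'c list set \<Rightarrow> bool" where
  "consistent l D \<longleftrightarrow> (\<forall>a\<in>D. \<forall>b\<in>D. key_equiv l a b \<longrightarrow> a = b)"

definition repair :: "nat \<Rightarrow> 'c list set \<Rightarrow> 'c list set \<Rightarrow> bool" where
  "repair l D r \<longleftrightarrow> r \<subseteq> D \<and> consistent l r \<and>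
     (\<forall>r'. r \<subseteq> r' \<and> r' \<subseteq> D \<and> consistent l r' \<longrightarrow> r' = r)"

definition sat_q :: "'v list \<Rightarrow> 'v list \<Rightarrow> 'c list set \<Rightarrow> 'c list \<Rightarrow> 'c list \<Rightarrow> bool" where
  "sat_q A B D a b \<longleftrightarrow> a \<in> D \<and> b \<in> D \<and> (\<exists>\<mu>. map \<mu> A = a \<and> map \<mu> B = b)"

definition sat_q_sym :: "'v list \<Rightarrow> 'v list \<Rightarrow> 'c list set \<Rightarrow> 'c list \<Rightarrow> 'c list \<Rightarrow> bool" where
  "sat_q_sym A B D a b \<longleftrightarrow> sat_q A B D a b \<or> sat_q A B D b a"

definition models_q :: "'v list \<Rightarrow> 'v list \<Rightarrow> 'c list set \<Rightarrow> bool" where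
  "models_q A B D \<longleftrightarrow> (\<exists>a\<in>D. \<exists>b\<in>D. sat_q A B D a b)"

definition certain :: "nat \<Rightarrow> 'v list \<Rightarrow> 'v list \<Rightarrow> 'c list set \<Rightarrow> bool" where
  "certain l A B D \<longleftrightarrow> (\<forall>r. repair l D r \<longrightarrow> models_q A B r)"

definition twoway_determined :: "nat \<Rightarrow> 'v list \<Rightarrow> 'v list \<Rightarrow> bool" where
  "twoway_determined l A B \<longleftrightarrow>
     \<not> key_set l A \<subseteq> key_set l B \<and> \<not> key_set l B \<subseteq> key_set l A \<and>
     key_set l A \<subseteq> vars B \<and> key_set l B \<subseteq> vars A"

definition equiv_single_atom ::
  "'c itself \<Rightarrow> nat \<Rightarrow> nat \<Rightarrow> 'v list \<Rightarrow> 'v list \<Rightarrow> bool" where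
  "equiv_single_atom _ k l A B \<longleftrightarrow>
     (\<exists>C :: 'v list. length C = k \<and>
        (\<forall>D :: 'c list set. database k D \<and> consistent l D \<longrightarrow>
           (models_q A B D \<longleftrightarrow> (\<exists>\<mu>. map \<mu> C \<in> D))))"

definition sol_edge :: "'v list \<Rightarrow> 'v list \<Rightarrow> 'c list set \<Rightarrow> 'c list \<Rightarrow> 'c list \<Rightarrow> bool" where
  "sol_edge A B D a b \<longleftrightarrow> a \<in> D \<and> b \<in> D \<and> sat_q_sym A B D a b"

definition component :: "'v list \<Rightarrow> 'v list \<Rightarrow> 'c list set \<Rightarrow> 'c list \<Rightarrow> 'c list set" where
  "component A B D a = {b. (a, b) \<in> {(x, y). sol_edge A B D x y}\<^sup>*}"

definition quasi_clique :: "nat \<Rightarrow> 'v list \<Rightarrow> 'v list \<Rightarrow> 'c list set \<Rightarrow> 'c list set \<Rightarrow> bool" where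
  "quasi_clique l A B D C \<longleftrightarrow>
     (\<forall>a\<in>C. \<forall>b\<in>C. \<not> key_equiv l a b \<longrightarrow> sol_edge A B D a b)"

definition clique :: "nat \<Rightarrow> 'v list \<Rightarrow> 'v list \<Rightarrow> 'c list set \<Rightarrow> 'c list \<Rightarrow> 'c list set" where
  "clique l A B D a =
     (if quasi_clique l A B D (component A B D a) then component A B D a else {a})"

definition block :: "nat \<Rightarrow> 'c list set \<Rightarrow> 'c list \<Rightarrow> 'c list set" where
  "block l D a = {b \<in> D. key_equiv l a b}"

definition blocks :: "nat \<Rightarrow> 'c list set \<Rightarrow> 'c list set set" where
  "blocks l D = block l D ` D"

definition H_V1 :: "nat \<Rightarrow> 'c list set \<Rightarrow> 'c list set set" where
  "H_V1 l D = blocks l D"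

definition H_V2 :: "nat \<Rightarrow> 'v list \<Rightarrow> 'v list \<Rightarrow> 'c list set \<Rightarrow> 'c list set set" where
  "H_V2 l A B D = clique l A B D ` D"

definition H_edge ::
  "'v list \<Rightarrow> 'v list \<Rightarrow> 'c list set \<Rightarrow> 'c list set \<Rightarrow> 'c list set \<Rightarrow> bool" where
  "H_edge A B D v1 v2 \<longleftrightarrow> (\<exists>a\<in>v1. a \<in> v2 \<and> \<not> sat_q A B D a a)"

definition Matching :: "nat \<Rightarrow> 'v list \<Rightarrow> 'v list \<Rightarrow> 'c list set \<Rightarrow> bool" where
  "Matching l A B D \<longleftrightarrow>
     (\<exists>f. inj_on f (H_V1 l D) \<and>
          (\<forall>v1\<in>H_V1 l D. f v1 \<in> H_V2 l A B D \<and> H_edge A B D v1 (f v1)))"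

end

theory Submission
  imports Defs
begin

text \<open>A repair \<open>r\<close> falsifying \<open>q\<close> yields a matching: send each block to the clique of
  its fact in \<open>r\<close>. These facts satisfy no \<open>q(aa)\<close>, so the assignment follows edges of
  \<open>H(D,q)\<close>; and no two of them are adjacent in \<open>G(D,q)\<close>, so two of them in a common
  clique are key-equal, which makes the assignment injective.\<close>

lemma block_eq_block:
  "key_equiv l a b \<Longrightarrow> block l D a = block l D b"
  unfolding block_def key_equiv_def by simp

lemma mem_clique_self: "a \<in> clique l A B D a"
  by (simp add: clique_def component_def)

lemma mem_cliqueD:
  assumes "b \<in> clique l A B D a"
  shows "b = a \<or> key_equiv l b a \<or> sol_edge A B D b a"
proof (cases "quasi_clique l A B D (component A B D a)")
  case True
  have "a \<in> component A B D a" by (simp add: component_def)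
  with True assms show ?thesis
    unfolding clique_def quasi_clique_def by auto
next
  case False
  with assms show ?thesis unfolding clique_def by auto
qed

lemma repair_meets_block:
  assumes "repair l D r" "d \<in> D"
  obtains a where "a \<in> r" "key_equiv l d a"
proof -
  have "\<exists>a\<in>r. key_equiv l d a"
  proof (rule ccontr)
    assume miss: "\<not> (\<exists>a\<in>r. key_equiv l d a)"
    then have "consistent l (insert d r)"
      using assms(1) unfolding repair_def consistent_def key_equiv_def
      by (metis insert_iff)
    then have "insert d r = r" using assms unfolding repair_def by blast
    with miss show False by (auto simp: key_equiv_def)
  qed
  then show ?thesis using that by blast
qed

lemma repair_representative:
  assumes "repair l D r" "v \<in> blocks l D"
  shows "\<exists>a\<in>r. a \<in> v \<and> v = block l D a"
proof -
  obtain d where d: "d \<in> D" "v = block l D d"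
    using assms(2) unfolding blocks_def by blast
  obtain a where a: "a \<in> r" "key_equiv l d a"
    using repair_meets_block[OF assms(1) d(1)] .
  have "a \<in> D" using a(1) assms(1) by (auto simp: repair_def)
  moreover have "a \<in> v" using a d \<open>a \<in> D\<close> by (simp add: block_def)
  ultimately show ?thesis using a d block_eq_block by metis
qed

lemma not_sat_q_if_not_models_q:
  assumes "\<not> models_q A B r" "a \<in> r" "b \<in> r"
  shows "\<not> sat_q A B D a b"
  using assms by (auto simp: models_q_def sat_q_def)

lemma Matching_if_falsifying_repair:
  assumes rep: "repair l D r" and falsified: "\<not> models_q A B r"
  shows "Matching l A B D"
proof -
  have "\<forall>v\<in>blocks l D. \<exists>a. a \<in> r \<and> a \<in> v \<and> v = block l D a"
    using repair_representative[OF rep] by blast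
  then obtain ch where ch: "\<forall>v\<in>blocks l D. ch v \<in> r \<and> ch v \<in> v \<and> v = block l D (ch v)"
    by (rule bchoice[THEN exE])
  have "r \<subseteq> D" using rep by (simp add: repair_def)
  define f where "f v = clique l A B D (ch v)" for v
  have "inj_on f (blocks l D)"
  proof (rule inj_onI)
    fix v w assume v: "v \<in> blocks l D" and w: "w \<in> blocks l D" and "f v = f w"
    have in_r: "ch v \<in> r" "ch w \<in> r" using ch v w by auto
    have "ch v \<in> clique l A B D (ch w)"
      using \<open>f v = f w\<close> mem_clique_self[of "ch v"] unfolding f_def by metis
    moreover have "\<not> sol_edge A B D (ch v) (ch w)"
      using not_sat_q_if_not_models_q[OF falsified] in_r
      by (auto simp: sol_edge_def sat_q_sym_def)
    ultimately have "key_equiv l (ch v) (ch w)"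
      using mem_cliqueD by (fastforce simp: key_equiv_def)
    then have "block l D (ch v) = block l D (ch w)" by (rule block_eq_block)
    then show "v = w" using ch v w by auto
  qed
  moreover have "f v \<in> H_V2 l A B D" "H_edge A B D v (f v)" if v: "v \<in> blocks l D" for v
  proof -
    have "ch v \<in> r" "ch v \<in> v" using ch v by auto
    then show "f v \<in> H_V2 l A B D" using \<open>r \<subseteq> D\<close> unfolding f_def H_V2_def by blast
    show "H_edge A B D v (f v)"
      using \<open>ch v \<in> r\<close> \<open>ch v \<in> v\<close> mem_clique_self not_sat_q_if_not_models_q[OF falsified]
      unfolding f_def H_edge_def by blast
  qed
  ultimately show ?thesis unfolding Matching_def H_V1_def by blast
qed

theorem proposition10p2:
  fixes k l :: nat and A B :: "'v list" and D :: "'c list set"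
  assumes "1 \<le> k" and "l \<le> k"
    and "length A = k" and "length B = k"
    and "twoway_determined l A B"
    and "key_tuple l A \<noteq> key_tuple l B"
    and "\<not> equiv_single_atom TYPE('c) k l A B"
    and "database k D"
    and "\<not> Matching l A B D"
  shows "certain l A B D"
  using assms(9) Matching_if_falsifying_repair unfolding certain_def by blast

end
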